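(* Let $(\Omega,d)$ be a metric space, $E$ a non-trivial locally convex Hausdorff space over $\mathbb{K}$ and $\mathcal{FV}(\Omega)$ a dom-space such that $\mathcal{FV}(\Omega)\subset\mathcal{C}_u(\Omega)$ as a linear subspace. If the map $\delta\colon\Omega\to\mathcal{FV}(\Omega)'_\kappa$, $x\mapsto\delta_x$, is uniformly continuous, then $S(u)\in\mathcal{C}_u(\Omega,E)$ for all $u\in\mathcal{FV}(\Omega)\varepsilon E$.
   Context: $\mathbb{K}\in\{\mathbb{R},\mathbb{C}\}$. $\mathcal{C}_u(\Omega,E)$ denotes the uniformly continuous maps from $(\Omega,d)$ to $E$ (with its canonical uniform structure), $\mathcal{C}_u(\Omega):=\mathcal{C}_u(\Omega,\mathbb{K})$. Framework: $J,M$ non-empty index sets, $(\omega_m)_{m\in M}$ non-empty sets, $\nu_{j,m}\colon\omega_m\to[0,\infty)$ such that for all $m$, $x\in\omega_m$ some $\nu_{j,m}(x)>0$; $\operatorname{AP}(\Omega)\subset\mathbb{K}^\Omega$ a linear subspace; $T_m\colon\operatorname{dom}T_m\to\mathbb{K}^{\omega_m}$ linear maps on linear subspaces of $\mathbb{K}^\Omega$; $\mathcal{FV}(\Omega):=\{f\in\operatorname{AP}(\Omega)\cap\bigcap_m\operatorname{dom}T_m: |f|_{j,m}:=\sup_{x\in\omega_m}|T_m(f)(x)|\nu_{j,m}(x)<\infty\ \forall j,m\}$ with these seminorms. It is a dom-space if it is Hausdorff, the seminorms are directed and every $\delta_x\colon f\mapsto f(x)$ belongs to $\mathcal{FV}(\Omega)'$.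 $\mathcal{FV}(\Omega)'_\kappa$: dual with the topology of uniform convergence on absolutely convex compact subsets of $\mathcal{FV}(\Omega)$. $\mathcal{FV}(\Omega)\varepsilon E$: continuous linear maps $\mathcal{FV}(\Omega)'_\kappa\to E$ with the topology of uniform convergence on equicontinuous sets; $S(u)(x):=u(\delta_x)$. *)

theory Defs
  imports "HOL-Analysis.Analysis"
begin

text \<open>
The scalar field K is a type variable 'k of class real_normed_field
(instantiated by real and complex). The metric space Omega is the universe of a
type 'a of class metric_space.
Index sets J, M are the (non-empty) types 'j, 'm; all sets omega_m live in a
common type 'w.
\<close>

definition k_subspace :: "('a \<Rightarrow> 'k::field) set \<Rightarrow> bool" where
  "k_subspace A \<longleftrightarrow> (\<lambda>x. 0) \<in> A \<and>
     (\<forall>f\<in>A. \<forall>g\<in>A. \<forall>c. (\<lambda>x. c * f x + g x) \<in> A)"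

definition fv_framework ::
  "('a \<Rightarrow> 'k::real_normed_field) set \<Rightarrow> ('m \<Rightarrow> ('a \<Rightarrow> 'k) set) \<Rightarrow>
   ('m \<Rightarrow> ('a \<Rightarrow> 'k) \<Rightarrow> 'w \<Rightarrow> 'k) \<Rightarrow> ('m \<Rightarrow> 'w set) \<Rightarrow> ('j \<Rightarrow> 'm \<Rightarrow> 'w \<Rightarrow> real) \<Rightarrow> bool" where
  "fv_framework AP domT T \<omega> \<nu> \<longleftrightarrow>
     (\<forall>m. \<omega> m \<noteq> {}) \<and>
     (\<forall>j m. \<forall>x\<in>\<omega> m. 0 \<le> \<nu> j m x) \<and>
     (\<forall>m. \<forall>x\<in>\<omega> m. \<exists>j. 0 < \<nu> j m x) \<and>
     k_subspace AP \<and>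
     (\<forall>m. k_subspace (domT m)) \<and>
     (\<forall>m. \<forall>f\<in>domT m. \<forall>g\<in>domT m. \<forall>c.
        T m (\<lambda>x. c * f x + g x) = (\<lambda>w. c * T m f w + T m g w))"

definition FV ::
  "('a \<Rightarrow> 'k::real_normed_field) set \<Rightarrow> ('m \<Rightarrow> ('a \<Rightarrow> 'k) set) \<Rightarrow>
   ('m \<Rightarrow> ('a \<Rightarrow> 'k) \<Rightarrow> 'w \<Rightarrow> 'k) \<Rightarrow> ('m \<Rightarrow> 'w set) \<Rightarrow> ('j \<Rightarrow> 'm \<Rightarrow> 'w \<Rightarrow> real) \<Rightarrow> ('a \<Rightarrow> 'k) set" where
  "FV AP domT T \<omega> \<nu> = {f. f \<in> AP \<and> (\<forall>m. f \<in> domT m) \<and>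
     (\<forall>j m. bdd_above ((\<lambda>x. norm (T m f x) * \<nu> j m x) ` \<omega> m))}"

definition fv_sn ::
  "('m \<Rightarrow> ('a \<Rightarrow> 'k::real_normed_field) \<Rightarrow> 'w \<Rightarrow> 'k) \<Rightarrow> ('m \<Rightarrow> 'w set) \<Rightarrow> ('j \<Rightarrow> 'm \<Rightarrow> 'w \<Rightarrow> real) \<Rightarrow>
   'j \<Rightarrow> 'm \<Rightarrow> ('a \<Rightarrow> 'k) \<Rightarrow> real" where
  "fv_sn T \<omega> \<nu> j m f = (SUP x\<in>\<omega> m. norm (T m f x) * \<nu> j m x)"

text \<open>Continuous linear functionals on a space F with the seminorms sn, represented
extensionally (value 0 outside F).\<close>
definition cont_functional ::
  "('a \<Rightarrow> 'k::real_normed_field) set \<Rightarrow> ('j \<Rightarrow> 'm \<Rightarrow> ('a \<Rightarrow> 'k) \<Rightarrow> real) \<Rightarrow> (('a \<Rightarrow> 'k) \<Rightarrow> 'k) \<Rightarrow> bool" where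
  "cont_functional F sn y \<longleftrightarrow>
     (\<forall>f. f \<notin> F \<longrightarrow> y f = 0) \<and>
     (\<forall>f\<in>F. \<forall>g\<in>F. \<forall>c. y (\<lambda>x. c * f x + g x) = c * y f + y g) \<and>
     (\<exists>P C. finite P \<and> 0 \<le> C \<and> (\<forall>f\<in>F. norm (y f) \<le> C * (\<Sum>(j,m)\<in>P. sn j m f)))"

definition dual :: "('a \<Rightarrow> 'k::real_normed_field) set \<Rightarrow> ('j \<Rightarrow> 'm \<Rightarrow> ('a \<Rightarrow> 'k) \<Rightarrow> real) \<Rightarrow> (('a \<Rightarrow> 'k) \<Rightarrow> 'k) set" where
  "dual F sn = {y. cont_functional F sn y}"

definition delta :: "('a \<Rightarrow> 'k::real_normed_field) set \<Rightarrow> 'a \<Rightarrow> ('a \<Rightarrow> 'k) \<Rightarrow> 'k" where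
  "delta F x = (\<lambda>f. if f \<in> F then f x else 0)"

definition dom_space ::
  "('a \<Rightarrow> 'k::real_normed_field) set \<Rightarrow> ('j \<Rightarrow> 'm \<Rightarrow> ('a \<Rightarrow> 'k) \<Rightarrow> real) \<Rightarrow> bool" where
  "dom_space F sn \<longleftrightarrow>
     (\<forall>f\<in>F. (\<forall>j m. sn j m f = 0) \<longrightarrow> f = (\<lambda>x. 0)) \<and>
     (\<forall>j1 m1 j2 m2. \<exists>j3 m3 C. \<forall>f\<in>F. max (sn j1 m1 f) (sn j2 m2 f) \<le> C * sn j3 m3 f) \<and>
     (\<forall>x. delta F x \<in> dual F sn)"

definition fv_open :: "('a \<Rightarrow> 'k::real_normed_field) set \<Rightarrow> ('j \<Rightarrow> 'm \<Rightarrow> ('a \<Rightarrow> 'k) \<Rightarrow> real) \<Rightarrow> ('a \<Rightarrow> 'k) set \<Rightarrow> bool" where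
  "fv_open F sn U \<longleftrightarrow> U \<subseteq> F \<and>
     (\<forall>f\<in>U. \<exists>P e. finite P \<and> 0 < e \<and>
        {g\<in>F. (\<Sum>(j,m)\<in>P. sn j m (\<lambda>x. g x - f x)) < e} \<subseteq> U)"

definition fv_compact :: "('a \<Rightarrow> 'k::real_normed_field) set \<Rightarrow> ('j \<Rightarrow> 'm \<Rightarrow> ('a \<Rightarrow> 'k) \<Rightarrow> real) \<Rightarrow> ('a \<Rightarrow> 'k) set \<Rightarrow> bool" where
  "fv_compact F sn K \<longleftrightarrow> K \<subseteq> F \<and>
     (\<forall>\<U>. (\<forall>U\<in>\<U>. fv_open F sn U) \<and> K \<subseteq> \<Union>\<U> \<longrightarrow> (\<exists>\<V>\<subseteq>\<U>. finite \<V> \<and> K \<subseteq> \<Union>\<V>))"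

definition abs_convex :: "('a \<Rightarrow> 'k::real_normed_field) set \<Rightarrow> bool" where
  "abs_convex K \<longleftrightarrow> (\<forall>f\<in>K. \<forall>g\<in>K. \<forall>a b. norm a + norm b \<le> 1 \<longrightarrow> (\<lambda>x. a * f x + b * g x) \<in> K)"

definition kappa_sn :: "('a \<Rightarrow> 'k::real_normed_field) set \<Rightarrow> (('a \<Rightarrow> 'k) \<Rightarrow> 'k) \<Rightarrow> ennreal" where
  "kappa_sn K y = (SUP f\<in>K. ennreal (norm (y f)))"

definition acx_compacts :: "('a \<Rightarrow> 'k::real_normed_field) set \<Rightarrow> ('j \<Rightarrow> 'm \<Rightarrow> ('a \<Rightarrow> 'k) \<Rightarrow> real) \<Rightarrow> ('a \<Rightarrow> 'k) set set" where
  "acx_compacts F sn = {K. fv_compact F sn K \<and> abs_convex K}"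

definition lc_hausdorff :: "('k::real_normed_field \<Rightarrow> 'e::ab_group_add \<Rightarrow> 'e) \<Rightarrow> ('i \<Rightarrow> 'e \<Rightarrow> real) \<Rightarrow> bool" where
  "lc_hausdorff sc q \<longleftrightarrow> Vector_Spaces.vector_space sc \<and>
     (\<forall>i x. 0 \<le> q i x) \<and>
     (\<forall>i x y. q i (x + y) \<le> q i x + q i y) \<and>
     (\<forall>i c x. q i (sc c x) = norm c * q i x) \<and>
     (\<forall>x. (\<forall>i. q i x = 0) \<longrightarrow> x = 0)"

text \<open>FV(Omega) epsilon E: continuous linear maps from the dual with topology kappa to E.\<close>
definition eps_prod ::
  "('a \<Rightarrow> 'k::real_normed_field) set \<Rightarrow> ('j \<Rightarrow> 'm \<Rightarrow> ('a \<Rightarrow> 'k) \<Rightarrow> real) \<Rightarrow>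
   ('k \<Rightarrow> 'e::ab_group_add \<Rightarrow> 'e) \<Rightarrow> ('i \<Rightarrow> 'e \<Rightarrow> real) \<Rightarrow> ((('a \<Rightarrow> 'k) \<Rightarrow> 'k) \<Rightarrow> 'e) set" where
  "eps_prod F sn sc q = {u.
     (\<forall>y\<in>dual F sn. \<forall>z\<in>dual F sn. \<forall>a b.
        u (\<lambda>f. a * y f + b * z f) = sc a (u y) + sc b (u z)) \<and>
     (\<forall>i. \<exists>\<K> C. finite \<K> \<and> \<K> \<subseteq> acx_compacts F sn \<and> 0 \<le> C \<and>
        (\<forall>y\<in>dual F sn. ennreal (q i (u y)) \<le> ennreal C * (\<Sum>K\<in>\<K>. kappa_sn K y)))}"

definition delta_unif_cont :: "('a::metric_space \<Rightarrow> 'k::real_normed_field) set \<Rightarrow> ('j \<Rightarrow> 'm \<Rightarrow> ('a \<Rightarrow> 'k) \<Rightarrow> real) \<Rightarrow> bool" where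
  "delta_unif_cont F sn \<longleftrightarrow>
     (\<forall>\<K> e. finite \<K> \<and> \<K> \<subseteq> acx_compacts F sn \<and> 0 < e \<longrightarrow>
        (\<exists>\<eta>>0. \<forall>x y. dist x y < \<eta> \<longrightarrow>
           (\<Sum>K\<in>\<K>. kappa_sn K (\<lambda>f. delta F x f - delta F y f)) < ennreal e))"

definition unif_cont_E :: "('i \<Rightarrow> 'e::ab_group_add \<Rightarrow> real) \<Rightarrow> ('a::metric_space \<Rightarrow> 'e) \<Rightarrow> bool" where
  "unif_cont_E q g \<longleftrightarrow>
     (\<forall>I e. finite I \<and> 0 < e \<longrightarrow>
        (\<exists>\<eta>>0. \<forall>x y. dist x y < \<eta> \<longrightarrow> (\<Sum>i\<in>I. q i (g x - g y)) < e))"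

end

theory Submission
  imports Defs
begin

text \<open>
Every u in FV(Omega) epsilon E is linear and continuous on the dual with the topology kappa,
so u(delta_x) - u(delta_y) = u(delta_x - delta_y) and each E-seminorm of this difference is
dominated by finitely many kappa-seminorms of delta_x - delta_y.  Uniform continuity of delta
makes the latter small uniformly in dist x y.
\<close>

lemma fv_sn_nonneg:
  assumes frame: "fv_framework AP domT T \<omega> \<nu>" and f: "f \<in> FV AP domT T \<omega> \<nu>"
  shows "0 \<le> fv_sn T \<omega> \<nu> j m f"
proof -
  from frame obtain x where x: "x \<in> \<omega> m" unfolding fv_framework_def by blast
  have bdd: "bdd_above ((\<lambda>x. norm (T m f x) * \<nu> j m x) ` \<omega> m)"
    using f unfolding FV_def by simp
  have "0 \<le> norm (T m f x) * \<nu> j m x" using frame x unfolding fv_framework_def by auto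
  also have "\<dots> \<le> fv_sn T \<omega> \<nu> j m f" unfolding fv_sn_def by (rule cSUP_upper[OF x bdd])
  finally show ?thesis .
qed

lemma dual_diff:
  assumes nn: "\<And>f j m. f \<in> F \<Longrightarrow> 0 \<le> sn j m f"
    and y: "y \<in> dual F sn" and z: "z \<in> dual F sn"
  shows "(\<lambda>f. y f - z f) \<in> dual F sn"
proof -
  from y obtain P1 C1 where P1: "finite P1" "0 \<le> C1"
      "\<forall>f\<in>F. norm (y f) \<le> C1 * (\<Sum>(j,m)\<in>P1. sn j m f)"
    and y0: "\<forall>f. f \<notin> F \<longrightarrow> y f = 0"
    and yl: "\<forall>f\<in>F. \<forall>g\<in>F. \<forall>c. y (\<lambda>x. c * f x + g x) = c * y f + y g"
    unfolding dual_def cont_functional_def by blast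
  from z obtain P2 C2 where P2: "finite P2" "0 \<le> C2"
      "\<forall>f\<in>F. norm (z f) \<le> C2 * (\<Sum>(j,m)\<in>P2. sn j m f)"
    and z0: "\<forall>f. f \<notin> F \<longrightarrow> z f = 0"
    and zl: "\<forall>f\<in>F. \<forall>g\<in>F. \<forall>c. z (\<lambda>x. c * f x + g x) = c * z f + z g"
    unfolding dual_def cont_functional_def by blast
  have bound: "norm (y f - z f) \<le> (C1 + C2) * (\<Sum>(j,m)\<in>P1 \<union> P2. sn j m f)"
    if f: "f \<in> F" for f
  proof -
    let ?S = "\<Sum>(j,m)\<in>P1 \<union> P2. sn j m f"
    have S1: "(\<Sum>(j,m)\<in>P1. sn j m f) \<le> ?S" and S2: "(\<Sum>(j,m)\<in>P2. sn j m f) \<le> ?S"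
      by (rule sum_mono2; use P1 P2 nn f in auto)+
    have "norm (y f - z f) \<le> norm (y f) + norm (z f)" by (rule norm_triangle_ineq4)
    also have "\<dots> \<le> C1 * (\<Sum>(j,m)\<in>P1. sn j m f) + C2 * (\<Sum>(j,m)\<in>P2. sn j m f)"
      using P1 P2 f by (meson add_mono)
    also have "\<dots> \<le> C1 * ?S + C2 * ?S"
      using S1 S2 P1(2) P2(2) by (meson add_mono mult_left_mono)
    finally show ?thesis by (simp add: algebra_simps)
  qed
  show ?thesis
    unfolding dual_def cont_functional_def mem_Collect_eq
  proof (intro conjI)
    show "\<forall>f. f \<notin> F \<longrightarrow> y f - z f = 0" using y0 z0 by simp
    show "\<forall>f\<in>F. \<forall>g\<in>F. \<forall>c. y (\<lambda>x. c * f x + g x) - z (\<lambda>x. c * f x + g x)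
            = c * (y f - z f) + (y g - z g)"
      using yl zl by (simp add: algebra_simps)
    show "\<exists>P C. finite P \<and> 0 \<le> C \<and> (\<forall>f\<in>F. norm (y f - z f) \<le> C * (\<Sum>(j,m)\<in>P. sn j m f))"
      using bound P1 P2 by (intro exI[of _ "P1 \<union> P2"] exI[of _ "C1 + C2"]) auto
  qed
qed

lemma eps_prod_diff:
  assumes vs: "Vector_Spaces.vector_space sc" and u: "u \<in> eps_prod F sn sc q"
    and y: "y \<in> dual F sn" and z: "z \<in> dual F sn"
  shows "u (\<lambda>f. y f - z f) = u y - u z"
proof -
  have md: "module sc" using vs by (simp add: vector_space_def module_def)
  have "u (\<lambda>f. 1 * y f + (-1) * z f) = sc 1 (u y) + sc (-1) (u z)"
    using u y z unfolding eps_prod_def by blast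
  then show ?thesis
    using module.scale_one[OF md] module.scale_minus_left[OF md, of 1] by simp
qed

lemma eps_prod_sum_bound:
  assumes q_nonneg: "\<And>i e. 0 \<le> q i e" and u: "u \<in> eps_prod F sn sc q" and I: "finite I"
  obtains \<K> C where "finite \<K>" "\<K> \<subseteq> acx_compacts F sn" "0 \<le> C"
    "\<And>y. y \<in> dual F sn \<Longrightarrow>
       ennreal (\<Sum>i\<in>I. q i (u y)) \<le> ennreal C * (\<Sum>K\<in>\<K>. kappa_sn K y)"
proof -
  obtain KK CC where KK: "\<And>i. finite (KK i)" "\<And>i. KK i \<subseteq> acx_compacts F sn" "\<And>i. 0 \<le> CC i"
    "\<And>i y. y \<in> dual F sn \<Longrightarrow> ennreal (q i (u y)) \<le> ennreal (CC i) * (\<Sum>K\<in>KK i. kappa_sn K y)"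
    using u unfolding eps_prod_def by simp metis
  define \<K> where "\<K> = (\<Union>i\<in>I. KK i)"
  have \<K>: "finite \<K>" "\<K> \<subseteq> acx_compacts F sn" unfolding \<K>_def using I KK(1,2) by auto
  have "ennreal (\<Sum>i\<in>I. q i (u y)) \<le> ennreal (\<Sum>i\<in>I. CC i) * (\<Sum>K\<in>\<K>. kappa_sn K y)"
    if y: "y \<in> dual F sn" for y
  proof -
    have "ennreal (\<Sum>i\<in>I. q i (u y)) = (\<Sum>i\<in>I. ennreal (q i (u y)))"
      using q_nonneg by simp
    also have "\<dots> \<le> (\<Sum>i\<in>I. ennreal (CC i) * (\<Sum>K\<in>\<K>. kappa_sn K y))"
    proof (rule sum_mono)
      fix i assume i: "i \<in> I"
      have "(\<Sum>K\<in>KK i. kappa_sn K y) \<le> (\<Sum>K\<in>\<K>. kappa_sn K y)"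
        by (rule sum_mono2[OF \<K>(1)]) (use i in \<open>auto simp: \<K>_def\<close>)
      then show "ennreal (q i (u y)) \<le> ennreal (CC i) * (\<Sum>K\<in>\<K>. kappa_sn K y)"
        using KK(4)[OF y, of i] by (meson mult_left_mono order_trans zero_le)
    qed
    also have "\<dots> = (\<Sum>i\<in>I. ennreal (CC i)) * (\<Sum>K\<in>\<K>. kappa_sn K y)"
      by (rule sum_distrib_right[symmetric])
    also have "\<dots> = ennreal (\<Sum>i\<in>I. CC i) * (\<Sum>K\<in>\<K>. kappa_sn K y)"
      using KK(3) by simp
    finally show ?thesis .
  qed
  with \<K> KK(3) show ?thesis by (intro that[of \<K> "\<Sum>i\<in>I. CC i"]) (auto simp: sum_nonneg)
qed

lemma unif_cont_E_if_dominated_by_delta: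
  fixes q :: "'i \<Rightarrow> 'e::ab_group_add \<Rightarrow> real" and g :: "'a::metric_space \<Rightarrow> 'e"
  assumes \<delta>: "delta_unif_cont F sn"
    and dominated: "\<And>I. finite I \<Longrightarrow> \<exists>\<K> C. finite \<K> \<and> \<K> \<subseteq> acx_compacts F sn \<and> 0 \<le> C \<and>
        (\<forall>x y. ennreal (\<Sum>i\<in>I. q i (g x - g y))
               \<le> ennreal C * (\<Sum>K\<in>\<K>. kappa_sn K (\<lambda>f. delta F x f - delta F y f)))"
  shows "unif_cont_E q g"
  unfolding unif_cont_E_def
proof (intro allI impI)
  fix I :: "'i set" and e :: real
  assume "finite I \<and> 0 < e"
  then have I: "finite I" and e: "0 < e" by auto
  obtain \<K> C where \<K>: "finite \<K>" "\<K> \<subseteq> acx_compacts F sn" and C: "0 \<le> C"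
    and bound: "\<And>x y. ennreal (\<Sum>i\<in>I. q i (g x - g y))
               \<le> ennreal C * (\<Sum>K\<in>\<K>. kappa_sn K (\<lambda>f. delta F x f - delta F y f))"
    using dominated[OF I] by blast
  define e' where "e' = e / (C + 1)"
  have e': "0 < e'" "C * e' < e"
    using e C by (auto simp: e'_def field_simps)
  obtain \<eta> where \<eta>: "\<eta> > 0" "\<And>x y. dist x y < \<eta> \<Longrightarrow>
      (\<Sum>K\<in>\<K>. kappa_sn K (\<lambda>f. delta F x f - delta F y f)) < ennreal e'"
    using \<delta> \<K> e'(1) unfolding delta_unif_cont_def by blast
  have "(\<Sum>i\<in>I. q i (g x - g y)) < e" if "dist x y < \<eta>" for x y
  proof -
    have "ennreal (\<Sum>i\<in>I. q i (g x - g y)) \<le> ennreal C * ennreal e'"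
      using bound[of x y] \<eta>(2)[OF that] by (meson less_imp_le mult_left_mono order_trans zero_le)
    also have "\<dots> = ennreal (C * e')" using C e' by (simp add: ennreal_mult)
    also have "\<dots> < ennreal e" using e' C by (subst ennreal_less_iff) auto
    finally show ?thesis
      using e by (cases "0 \<le> (\<Sum>i\<in>I. q i (g x - g y))") (auto simp: ennreal_less_iff)
  qed
  with \<eta>(1) show "\<exists>\<eta>>0. \<forall>x y. dist x y < \<eta> \<longrightarrow> (\<Sum>i\<in>I. q i (g x - g y)) < e" by blast
qed

theorem proposition4p6:
  fixes AP :: "('a::metric_space \<Rightarrow> 'k::real_normed_field) set"
    and domT :: "'m \<Rightarrow> ('a \<Rightarrow> 'k) set"
    and T :: "'m \<Rightarrow> ('a \<Rightarrow> 'k) \<Rightarrow> 'w \<Rightarrow> 'k"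
    and \<omega> :: "'m \<Rightarrow> 'w set"
    and \<nu> :: "'j \<Rightarrow> 'm \<Rightarrow> 'w \<Rightarrow> real"
    and sc :: "'k \<Rightarrow> 'e::ab_group_add \<Rightarrow> 'e"
    and q :: "'i \<Rightarrow> 'e \<Rightarrow> real"
  assumes frame: "fv_framework AP domT T \<omega> \<nu>"
    and E: "lc_hausdorff sc q"
    and E_nontriv: "\<exists>e::'e. e \<noteq> 0"
    and dom: "dom_space (FV AP domT T \<omega> \<nu>) (fv_sn T \<omega> \<nu>)"
    and Cu: "\<forall>f\<in>FV AP domT T \<omega> \<nu>. uniformly_continuous_on UNIV f"
    and \<delta>: "delta_unif_cont (FV AP domT T \<omega> \<nu>) (fv_sn T \<omega> \<nu>)"
  shows "\<forall>u\<in>eps_prod (FV AP domT T \<omega> \<nu>) (fv_sn T \<omega> \<nu>) sc q.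
           unif_cont_E q (\<lambda>x. u (delta (FV AP domT T \<omega> \<nu>) x))"
proof
  let ?F = "FV AP domT T \<omega> \<nu>" and ?sn = "fv_sn T \<omega> \<nu>"
  fix u assume u: "u \<in> eps_prod ?F ?sn sc q"
  have vs: "Vector_Spaces.vector_space sc" and q_nonneg: "\<And>i e. 0 \<le> q i e"
    using E unfolding lc_hausdorff_def by blast+
  have delta_dual: "delta ?F x \<in> dual ?F ?sn" for x
    using dom unfolding dom_space_def by blast
  have u_delta_diff: "u (delta ?F x) - u (delta ?F y) = u (\<lambda>f. delta ?F x f - delta ?F y f)" for x y
    using eps_prod_diff[OF vs u delta_dual delta_dual] by simp
  have delta_diff_dual: "(\<lambda>f. delta ?F x f - delta ?F y f) \<in> dual ?F ?sn" for x y
    using dual_diff[OF fv_sn_nonneg[OF frame] delta_dual delta_dual] .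
  show "unif_cont_E q (\<lambda>x. u (delta ?F x))"
  proof (rule unif_cont_E_if_dominated_by_delta[OF \<delta>])
    fix I :: "'i set" assume "finite I"
    then obtain \<K> C where "finite \<K>" "\<K> \<subseteq> acx_compacts ?F ?sn" "0 \<le> C"
      "\<And>y. y \<in> dual ?F ?sn \<Longrightarrow>
        ennreal (\<Sum>i\<in>I. q i (u y)) \<le> ennreal C * (\<Sum>K\<in>\<K>. kappa_sn K y)"
      using eps_prod_sum_bound[OF q_nonneg u] by blast
    then show "\<exists>\<K> C. finite \<K> \<and> \<K> \<subseteq> acx_compacts ?F ?sn \<and> 0 \<le> C \<and>
        (\<forall>x y. ennreal (\<Sum>i\<in>I. q i (u (delta ?F x) - u (delta ?F y)))
           \<le> ennreal C * (\<Sum>K\<in>\<K>. kappa_sn K (\<lambda>f. delta ?F x f - delta ?F y f)))"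
      unfolding u_delta_diff using delta_diff_dual by blast
  qed
qed

end
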